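(* Let $L>0$, $I$ a finite index set and $\{(x_i,f_i,g_i,h_i,s_i)\}_{i\in I}\subset\mathbb{R}^n\times\mathbb{R}\times\mathbb{R}^n\times\mathbb{R}\times\mathbb{R}^n$. The following are equivalent: (i) there exist functions $f,h:\mathbb{R}^n\to\mathbb{R}$ with $f$ and $Lh-f$ convex such that for all $i\in I$: $f_i=f(x_i)$, $g_i\in\partial f(x_i)$, $h_i=h(x_i)$, $s_i\in\partial h(x_i)$, and $Ls_i-g_i\in\partial(Lh-f)(x_i)$; (ii) for all $i,j\in I$ with $i\neq j$, \[ f_i-f_j-\langle g_j,x_i-x_j\rangle\ge0,\qquad (Lh_i-f_i)-(Lh_j-f_j)-\langle Ls_j-g_j,x_i-x_j\rangle\ge0. \]
   Context: $\partial$ denotes the convex subdifferential. *)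

theory Defs
  imports "HOL-Analysis.Analysis"
begin

definition subdifferential :: "('a::real_inner \<Rightarrow> real) \<Rightarrow> 'a \<Rightarrow> 'a set" where
  "subdifferential f x = {g. \<forall>y. f y \<ge> f x + inner g (y - x)}"

end

theory Submission
  imports Defs
begin

text \<open>Writing p = L h - f, the data are interpolable by a pair (f, h) exactly when (fv, g) is
  interpolable by a convex f and (L hv - fv, L s - g) by a convex p: conversely h = (f + p) / L
  has the subgradient s = (g + (L s - g)) / L. A single convex interpolation problem with data
  (X i, F i, G i) is solved by the maximum of the affine functions F j + \<langle>G j, y - X j\<rangle>,
  whose value at X i is F i precisely when the stated inequalities hold.\<close>

lemma subdifferentialD:
  "g \<in> subdifferential f x \<Longrightarrow> f x + inner g (y - x) \<le> f y"
  by (simp add: subdifferential_def)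

lemma subdifferential_add:
  assumes "g \<in> subdifferential f x" and "g' \<in> subdifferential f' x"
  shows "g + g' \<in> subdifferential (\<lambda>y. f y + f' y) x"
  unfolding subdifferential_def
proof (intro CollectI allI)
  fix y
  show "f x + f' x + inner (g + g') (y - x) \<le> f y + f' y"
    using add_mono[OF subdifferentialD[OF assms(1)] subdifferentialD[OF assms(2)], of y y]
    by (simp add: inner_add_left)
qed

lemma subdifferential_cmul:
  assumes "c \<ge> 0" and "g \<in> subdifferential f x"
  shows "c *\<^sub>R g \<in> subdifferential (\<lambda>y. c * f y) x"
  using assms mult_left_mono[OF subdifferentialD[OF assms(2)] assms(1)]
  by (simp add: subdifferential_def distrib_left)

lemma convex_on_affine_inner:
  fixes a b :: "'a::real_inner"
  assumes "convex S"
  shows "convex_on S (\<lambda>y. c + inner a (y - b))"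
proof (rule convex_onI)
  fix x y :: 'a and t :: real
  have "c + inner a ((1 - t) *\<^sub>R x + t *\<^sub>R y - b)
      = (1 - t) * (c + inner a (x - b)) + t * (c + inner a (y - b))"
    by (simp add: inner_diff_right inner_add_right algebra_simps)
  then show "c + inner a ((1 - t) *\<^sub>R x + t *\<^sub>R y - b)
      \<le> (1 - t) * (c + inner a (x - b)) + t * (c + inner a (y - b))"
    by simp
qed (rule assms)

lemma convex_on_Max:
  assumes "finite I" and "I \<noteq> {}" and "\<And>i. i \<in> I \<Longrightarrow> convex_on S (f i)"
  shows "convex_on S (\<lambda>x. Max ((\<lambda>i. f i x) ` I))"
proof (rule convex_onI)
  show "convex S"
    using assms(2,3) convex_on_imp_convex by blast
  fix t :: real and x y
  assume t: "0 < t" "t < 1" and xy: "x \<in> S" "y \<in> S"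
  let ?z = "(1 - t) *\<^sub>R x + t *\<^sub>R y"
  obtain j where j: "j \<in> I" "Max ((\<lambda>i. f i ?z) ` I) = f j ?z"
    using obtains_MAX[OF assms(1,2)] by blast
  have "f j ?z \<le> (1 - t) * f j x + t * f j y"
    using convex_onD[OF assms(3)[OF j(1)]] t xy by simp
  also have "\<dots> \<le> (1 - t) * Max ((\<lambda>i. f i x) ` I) + t * Max ((\<lambda>i. f i y) ` I)"
    using t j(1) assms(1) by (intro add_mono mult_left_mono Max_ge) auto
  finally show "Max ((\<lambda>i. f i ?z) ` I)
      \<le> (1 - t) * Max ((\<lambda>i. f i x) ` I) + t * Max ((\<lambda>i. f i y) ` I)"
    using j(2) by simp
qed

lemma convex_interpolable_iff:
  fixes X G :: "'i \<Rightarrow> 'a::real_inner" and F :: "'i \<Rightarrow> real"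
  assumes "finite I"
  shows "(\<exists>f. convex_on UNIV f \<and> (\<forall>i\<in>I. F i = f (X i) \<and> G i \<in> subdifferential f (X i)))
     \<longleftrightarrow> (\<forall>i\<in>I. \<forall>j\<in>I. i \<noteq> j \<longrightarrow> F i - F j - inner (G j) (X i - X j) \<ge> 0)"
    (is "?interpolable \<longleftrightarrow> ?conditions")
proof
  assume ?interpolable
  then obtain f where f: "\<forall>i\<in>I. F i = f (X i) \<and> G i \<in> subdifferential f (X i)"
    by blast
  show ?conditions
  proof (intro ballI impI)
    fix i j assume "i \<in> I" "j \<in> I"
    then show "F i - F j - inner (G j) (X i - X j) \<ge> 0"
      using f subdifferentialD[of "G j" f "X j" "X i"] by simp
  qed
next
  assume conditions: ?conditions
  show ?interpolable
  proof (cases "I = {}")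
    case True
    then show ?thesis
      by (auto simp: convex_on_const)
  next
    case False
    define f where "f y = Max ((\<lambda>j. F j + inner (G j) (y - X j)) ` I)" for y
    have minorant: "F j + inner (G j) (y - X j) \<le> f y" if "j \<in> I" for j y
      unfolding f_def using assms that by (intro Max_ge) auto
    have "convex_on UNIV f"
      unfolding f_def using assms False by (intro convex_on_Max convex_on_affine_inner) auto
    moreover have "f (X i) = F i" if i: "i \<in> I" for i
    proof (rule antisym)
      obtain j where "j \<in> I" "f (X i) = F j + inner (G j) (X i - X j)"
        using obtains_MAX[OF assms False] unfolding f_def by blast
      then show "f (X i) \<le> F i"
        using conditions i by (cases "i = j") force+
      show "F i \<le> f (X i)"
        using minorant[OF i, of "X i"] by simp
    qed
    ultimately show ?thesis
      using minorant by (intro exI[of _ f]) (auto simp: subdifferential_def)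
  qed
qed

lemma convex_pair_interpolable_iff:
  fixes L :: real and X G S :: "'i \<Rightarrow> 'a::real_inner" and F H :: "'i \<Rightarrow> real"
  assumes "L > 0"
  shows "(\<exists>f h. convex_on UNIV f \<and> convex_on UNIV (\<lambda>y. L * h y - f y) \<and>
            (\<forall>i\<in>I. F i = f (X i) \<and> G i \<in> subdifferential f (X i) \<and>
                    H i = h (X i) \<and> S i \<in> subdifferential h (X i) \<and>
                    L *\<^sub>R S i - G i \<in> subdifferential (\<lambda>y. L * h y - f y) (X i)))
     \<longleftrightarrow>
     (\<exists>f. convex_on UNIV f \<and> (\<forall>i\<in>I. F i = f (X i) \<and> G i \<in> subdifferential f (X i))) \<and>
     (\<exists>p. convex_on UNIV p \<and>
        (\<forall>i\<in>I. L * H i - F i = p (X i) \<and> L *\<^sub>R S i - G i \<in> subdifferential p (X i)))"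
    (is "?pair \<longleftrightarrow> ?split")
proof
  assume ?pair
  then show ?split
    by fastforce
next
  assume ?split
  then obtain f p where
    f: "convex_on UNIV f" "\<forall>i\<in>I. F i = f (X i) \<and> G i \<in> subdifferential f (X i)" and
    p: "convex_on UNIV p" "\<forall>i\<in>I. L * H i - F i = p (X i) \<and> L *\<^sub>R S i - G i \<in> subdifferential p (X i)"
    by blast
  define h where "h y = inverse L * (f y + p y)" for y
  have p_eq: "(\<lambda>y. L * h y - f y) = p"
    using assms by (simp add: h_def mult.assoc[symmetric])
  have "S i \<in> subdifferential h (X i)" if "i \<in> I" for i
  proof -
    have "inverse L *\<^sub>R (G i + (L *\<^sub>R S i - G i)) \<in> subdifferential h (X i)"
      unfolding h_def using assms f(2) p(2) that
      by (intro subdifferential_cmul subdifferential_add) auto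
    then show ?thesis
      using assms by simp
  qed
  moreover have "H i = h (X i)" if "i \<in> I" for i
    using assms f(2) p(2) that by (simp add: h_def field_simps)
  ultimately show ?pair
    using f p unfolding p_eq[symmetric] by blast
qed

theorem corollary4p3:
  fixes L :: real and I :: "'i set"
    and x g s :: "'i \<Rightarrow> real ^ 'n" and fv hv :: "'i \<Rightarrow> real"
  assumes "L > 0" and "finite I"
  shows "(\<exists>f h :: real ^ 'n \<Rightarrow> real.
            convex_on UNIV f \<and> convex_on UNIV (\<lambda>y. L * h y - f y) \<and>
            (\<forall>i\<in>I. fv i = f (x i) \<and> g i \<in> subdifferential f (x i) \<and>
                    hv i = h (x i) \<and> s i \<in> subdifferential h (x i) \<and>
                    L *\<^sub>R s i - g i \<in> subdifferential (\<lambda>y. L * h y - f y) (x i)))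
     \<longleftrightarrow>
     (\<forall>i\<in>I. \<forall>j\<in>I. i \<noteq> j \<longrightarrow>
        fv i - fv j - inner (g j) (x i - x j) \<ge> 0 \<and>
        (L * hv i - fv i) - (L * hv j - fv j) - inner (L *\<^sub>R s j - g j) (x i - x j) \<ge> 0)"
  unfolding convex_pair_interpolable_iff[OF assms(1)]
    convex_interpolable_iff[OF assms(2), of fv x g]
    convex_interpolable_iff[OF assms(2), of "\<lambda>i. L * hv i - fv i" x "\<lambda>i. L *\<^sub>R s i - g i"]
  by blast

end
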